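(* For every finite $d\in\mathbb N$, the infimum of $\int_{\mathcal Q} v(q)\,dq$ over all $v\in\mathbb R[q]_d$ satisfying $v(q)-x\ge0$ for all $(q,x,y)\in\mathcal Z$ is attained.
   Context: Let $n\ge1$, $\mathcal Q=[-1,1]^n$, $dq$ Lebesgue measure, and $\mathbb R[q]_d$ the real polynomials in $q=(q_1,\dots,q_n)$ of degree at most $d$. Let $m\ge1$ and $p(q,s)=\sum_{k=0}^m p_k(q)s^k$ with $p_k\in\mathbb R[q]$, $p_m\equiv1$, $s\in\mathbb C$. Writing $s=x+iy$, define $p_\Re,p_\Im\in\mathbb R[q,x,y]$ by $p(q,x+iy)=p_\Re(q,x,y)+i\,p_\Im(q,x,y)$, and $\mathcal Z=\{(q,x,y): q\in\mathcal Q,\ p_\Re(q,x,y)=p_\Im(q,x,y)=0\}$. *)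

theory Defs
  imports "HOL-Analysis.Analysis"
begin

definition poly_fun_deg :: "nat \<Rightarrow> ((real^'n) \<Rightarrow> real) set" where
  "poly_fun_deg d = {v. \<exists>c :: ('n \<Rightarrow> nat) \<Rightarrow> real. \<forall>q.
      v q = (\<Sum>\<alpha>\<in>{\<alpha>. sum \<alpha> UNIV \<le> d}. c \<alpha> * (\<Prod>i\<in>UNIV. (q $ i) ^ (\<alpha> i)))}"

definition poly_fun :: "((real^'n) \<Rightarrow> real) set" where
  "poly_fun = (\<Union>d. poly_fun_deg d)"

definition Qbox :: "(real^'n) set" where
  "Qbox = {q. \<forall>i. \<bar>q $ i\<bar> \<le> 1}"

definition peval :: "(nat \<Rightarrow> real^'n \<Rightarrow> real) \<Rightarrow> nat \<Rightarrow> real^'n \<Rightarrow> complex \<Rightarrow> complex" where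
  "peval p m q s = (\<Sum>k\<le>m. complex_of_real (p k q) * s ^ k)"

definition pRe :: "(nat \<Rightarrow> real^'n \<Rightarrow> real) \<Rightarrow> nat \<Rightarrow> real^'n \<Rightarrow> real \<Rightarrow> real \<Rightarrow> real" where
  "pRe p m q x y = Re (peval p m q (Complex x y))"

definition pIm :: "(nat \<Rightarrow> real^'n \<Rightarrow> real) \<Rightarrow> nat \<Rightarrow> real^'n \<Rightarrow> real \<Rightarrow> real \<Rightarrow> real" where
  "pIm p m q x y = Im (peval p m q (Complex x y))"

definition Zset :: "(nat \<Rightarrow> real^'n \<Rightarrow> real) \<Rightarrow> nat \<Rightarrow> ((real^'n) \<times> real \<times> real) set" where
  "Zset p m = {(q, x, y). q \<in> Qbox \<and> pRe p m q x y = 0 \<and> pIm p m q x y = 0}"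

definition feasible :: "(nat \<Rightarrow> real^'n \<Rightarrow> real) \<Rightarrow> nat \<Rightarrow> nat \<Rightarrow> ((real^'n) \<Rightarrow> real) set" where
  "feasible p m d = {v \<in> poly_fun_deg d. \<forall>(q, x, y) \<in> Zset p m. v q - x \<ge> 0}"

end

theory Submission
  imports Defs "HOL-Complex_Analysis.Cauchy_Integral_Formula"
begin

text \<open>For every \<open>q \<in> Q\<close> the monic polynomial \<open>p(q,\<cdot>)\<close> has a root by the fundamental theorem
  of algebra, and all its roots have modulus at most \<open>max 1 (m M)\<close> when the lower coefficients
  are bounded by \<open>M\<close> on \<open>Q\<close>. Hence every feasible \<open>v\<close> is bounded below by a constant \<open>-R\<close> on
  \<open>Q\<close>, and the constant \<open>R\<close> is feasible. In coefficient space the feasible set is closed and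
  the objective is linear. A nonzero polynomial cannot be nonnegative on \<open>Q\<close> with nonpositive
  integral, so by compactness of the unit sphere of coefficients there is a uniform \<open>\<delta> > 0\<close>
  such that every unit coefficient vector gives a polynomial that is below \<open>-\<delta>\<close> somewhere on
  \<open>Q\<close> or has integral above \<open>\<delta>\<close>. By homogeneity the feasible coefficient vectors with
  objective below a given level are bounded, hence form a compact set on which the objective
  attains its minimum.\<close>

lemma continuous_attains_inf_sublevel:
  fixes f :: "'a::topological_space \<Rightarrow> 'b::linorder_topology"
  assumes "x0 \<in> F" and "compact (F \<inter> {x. f x \<le> f x0})"
    and "continuous_on (F \<inter> {x. f x \<le> f x0}) f"
  shows "\<exists>x\<in>F. \<forall>y\<in>F. f x \<le> f y"
proof -
  obtain x where x: "x \<in> F \<inter> {x. f x \<le> f x0}" and min: "\<forall>y\<in>F \<inter> {x. f x \<le> f x0}. f x \<le> f y"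
    using continuous_attains_inf[OF assms(2) _ assms(3)] assms(1) by blast
  have "f x \<le> f y" if "y \<in> F" for y
    using that x min by (cases "f y \<le> f x0") auto
  with x show ?thesis by blast
qed

lemma polyfun_vanishing_on_interval:
  fixes a :: "nat \<Rightarrow> real"
  assumes "\<forall>t\<in>{-1..1}. (\<Sum>k\<le>d. a k * t ^ k) = 0"
  shows "\<forall>k\<le>d. a k = 0"
proof (rule ccontr)
  assume "\<not> (\<forall>k\<le>d. a k = 0)"
  then have "finite {t. (\<Sum>k\<le>d. a k * t ^ k) = 0}"
    by (intro polyfun_rootbound_finite) auto
  moreover have "{-1..1} \<subseteq> {t. (\<Sum>k\<le>d. a k * t ^ k) = 0}"
    using assms by blast
  ultimately have "finite {-1..1::real}"
    by (rule finite_subset[rotated])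
  then show False
    using infinite_Icc[of "-1::real" 1] by simp
qed

lemma sum_PiE_insert_monomials:
  fixes c :: "('n::finite \<Rightarrow> nat) \<Rightarrow> real" and q :: "real^'n"
  assumes "j \<notin> S"
  shows "(\<Sum>\<alpha>\<in>PiE (insert j S) (\<lambda>_. {..d}). c \<alpha> * (\<Prod>i\<in>insert j S. (q$i) ^ \<alpha> i))
    = (\<Sum>k\<le>d. (\<Sum>\<beta>\<in>PiE S (\<lambda>_. {..d}). c (\<beta>(j:=k)) * (\<Prod>i\<in>S. (q$i) ^ \<beta> i)) * (q$j) ^ k)"
proof -
  have prod_upd: "(\<Prod>i\<in>insert j S. (q$i) ^ (\<beta>(j:=k)) i) = (q$j) ^ k * (\<Prod>i\<in>S. (q$i) ^ \<beta> i)"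
    for \<beta> k
  proof -
    have "(\<Prod>i\<in>S. (q$i) ^ (\<beta>(j:=k)) i) = (\<Prod>i\<in>S. (q$i) ^ \<beta> i)"
      using assms by (intro prod.cong) auto
    then show ?thesis
      using assms by (cases "finite S") simp_all
  qed
  have "(\<Sum>\<alpha>\<in>PiE (insert j S) (\<lambda>_. {..d}). c \<alpha> * (\<Prod>i\<in>insert j S. (q$i) ^ \<alpha> i))
     = (\<Sum>x\<in>{..d} \<times> PiE S (\<lambda>_. {..d}).
          (\<lambda>\<alpha>. c \<alpha> * (\<Prod>i\<in>insert j S. (q$i) ^ \<alpha> i)) ((\<lambda>(k, \<beta>). \<beta>(j := k)) x))"
    unfolding PiE_insert_eq
    by (rule sum.reindex[unfolded comp_def]) (rule inj_combinator[OF assms])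
  also have "\<dots> = (\<Sum>k\<le>d. \<Sum>\<beta>\<in>PiE S (\<lambda>_. {..d}).
      c (\<beta>(j:=k)) * (\<Prod>i\<in>insert j S. (q$i) ^ (\<beta>(j:=k)) i))"
    by (simp add: sum.cartesian_product split_def)
  also have "\<dots> = (\<Sum>k\<le>d. \<Sum>\<beta>\<in>PiE S (\<lambda>_. {..d}). c (\<beta>(j:=k)) * ((q$j) ^ k * (\<Prod>i\<in>S. (q$i) ^ \<beta> i)))"
    by (intro sum.cong refl arg_cong2[where f="(*)"] prod_upd)
  also have "\<dots> = (\<Sum>k\<le>d. (\<Sum>\<beta>\<in>PiE S (\<lambda>_. {..d}). c (\<beta>(j:=k)) * (\<Prod>i\<in>S. (q$i) ^ \<beta> i)) * (q$j) ^ k)"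
    by (simp add: sum_distrib_left sum_distrib_right mult_ac)
  finally show ?thesis .
qed

lemma poly_vanishing_on_Qbox_coeffs_zero:
  fixes c :: "('n::finite \<Rightarrow> nat) \<Rightarrow> real"
  assumes "finite S"
    and "\<forall>q\<in>(Qbox::(real^'n) set). (\<Sum>\<alpha>\<in>PiE S (\<lambda>_. {..d}). c \<alpha> * (\<Prod>i\<in>S. (q$i) ^ \<alpha> i)) = 0"
  shows "\<forall>\<alpha>\<in>PiE S (\<lambda>_. {..d}). c \<alpha> = 0"
  using assms
proof (induction S arbitrary: c rule: finite_induct)
  case empty
  have "(1::real^'n) \<in> Qbox" by (simp add: Qbox_def)
  with empty show ?case by auto
next
  case (insert j S)
  define G where "G k q = (\<Sum>\<beta>\<in>PiE S (\<lambda>_. {..d}). c (\<beta>(j:=k)) * (\<Prod>i\<in>S. (q$i) ^ \<beta> i))"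
    for k and q :: "real^'n"
  \<comment> \<open>\<open>G k q\<close> does not depend on the coordinate \<open>q$j\<close>, so varying it over \<open>[-1,1]\<close>
    gives a vanishing univariate polynomial with coefficients \<open>G k q\<close>.\<close>
  have G_upd: "G k (\<chi> i. if i = j then t else q $ i) = G k q" for k t q
    unfolding G_def using insert.hyps(2) by (intro sum.cong refl arg_cong2[where f="(*)"] prod.cong) auto
  have G_zero: "G k q = 0" if "q \<in> Qbox" "k \<le> d" for q k
  proof -
    have "(\<Sum>k\<le>d. G k q * t ^ k) = 0" if "t \<in> {-1..1}" for t
    proof -
      have "(\<chi> i. if i = j then t else q $ i) \<in> Qbox"
        using \<open>q \<in> Qbox\<close> that by (auto simp: Qbox_def)
      from insert.prems[rule_format, OF this]
      have "(\<Sum>k\<le>d. G k (\<chi> i. if i = j then t else q $ i) * (\<chi> i. if i = j then t else q $ i) $ j ^ k) = 0"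
        by (simp only: sum_PiE_insert_monomials[OF insert.hyps(2)] G_def)
      then show ?thesis by (simp add: G_upd)
    qed
    then have "\<forall>k\<le>d. G k q = 0"
      by (intro polyfun_vanishing_on_interval) blast
    with \<open>k \<le> d\<close> show ?thesis by blast
  qed
  show ?case
  proof
    fix \<alpha> assume \<alpha>: "\<alpha> \<in> PiE (insert j S) (\<lambda>_. {..d})"
    have "\<alpha>(j := undefined) \<in> PiE S (\<lambda>_. {..d})"
      using \<alpha> insert.hyps(2) by (auto simp: PiE_def extensional_def)
    moreover have "\<forall>\<beta>\<in>PiE S (\<lambda>_. {..d}). c (\<beta>(j := \<alpha> j)) = 0"
      using insert.IH[of "\<lambda>\<beta>. c (\<beta>(j := \<alpha> j))"] G_zero \<alpha> unfolding G_def by auto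
    ultimately show "c \<alpha> = 0" by fastforce
  qed
qed

definition exponents :: "nat \<Rightarrow> ('n::finite \<Rightarrow> nat) set" where
  "exponents d = {\<alpha>. sum \<alpha> UNIV \<le> d}"

definition monomial :: "('n::finite \<Rightarrow> nat) \<Rightarrow> real^'n \<Rightarrow> real" where
  "monomial \<alpha> q = (\<Prod>i\<in>UNIV. (q$i) ^ \<alpha> i)"

definition poly_of_coeffs :: "nat \<Rightarrow> (('n::finite \<Rightarrow> nat) \<Rightarrow> real) \<Rightarrow> real^'n \<Rightarrow> real" where
  "poly_of_coeffs d c q = (\<Sum>\<alpha>\<in>exponents d. c \<alpha> * monomial \<alpha> q)"

definition coeff_space :: "nat \<Rightarrow> (('n::finite \<Rightarrow> nat) \<Rightarrow> real) set" where
  "coeff_space d = {c. \<forall>\<alpha>. \<alpha> \<notin> exponents d \<longrightarrow> c \<alpha> = 0}"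

lemma exponents_subset_PiE: "exponents d \<subseteq> PiE UNIV (\<lambda>_::'n::finite. {..d})"
proof
  fix \<alpha> :: "'n \<Rightarrow> nat" assume "\<alpha> \<in> exponents d"
  then have "\<alpha> i \<le> d" for i
    unfolding exponents_def using member_le_sum[of i UNIV \<alpha>] by auto
  then show "\<alpha> \<in> PiE UNIV (\<lambda>_. {..d})" by auto
qed

lemma finite_exponents: "finite (exponents d)"
  by (rule finite_subset[OF exponents_subset_PiE]) (simp add: finite_PiE)

lemma poly_of_coeffs_eq_0_on_Qbox:
  assumes "\<forall>q\<in>(Qbox::(real^'n::finite) set). poly_of_coeffs d c q = 0" and "\<alpha> \<in> exponents d"
  shows "c \<alpha> = 0"
proof -
  define c' where "c' \<alpha> = (if \<alpha> \<in> exponents d then c \<alpha> else 0)" for \<alpha>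
  have "(\<Sum>\<alpha>\<in>PiE UNIV (\<lambda>_. {..d}). c' \<alpha> * (\<Prod>i\<in>UNIV. (q$i) ^ \<alpha> i)) = poly_of_coeffs d c q"
    for q :: "real^'n"
  proof -
    have "(\<Sum>\<alpha>\<in>PiE UNIV (\<lambda>_. {..d}). c' \<alpha> * (\<Prod>i\<in>UNIV. (q$i) ^ \<alpha> i))
        = (\<Sum>\<alpha>\<in>PiE UNIV (\<lambda>_. {..d}). if \<alpha> \<in> exponents d then c \<alpha> * monomial \<alpha> q else 0)"
      unfolding c'_def monomial_def by (intro sum.cong) auto
    also have "\<dots> = (\<Sum>\<alpha>\<in>PiE UNIV (\<lambda>_. {..d}) \<inter> exponents d. c \<alpha> * monomial \<alpha> q)"
      by (simp add: sum.inter_restrict finite_PiE)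
    also have "PiE UNIV (\<lambda>_. {..d}) \<inter> exponents d = exponents d"
      using exponents_subset_PiE by blast
    finally show ?thesis unfolding poly_of_coeffs_def .
  qed
  then have "\<forall>\<alpha>\<in>PiE UNIV (\<lambda>_. {..d}). c' \<alpha> = 0"
    using assms(1) by (intro poly_vanishing_on_Qbox_coeffs_zero) auto
  then show ?thesis
    using assms(2) exponents_subset_PiE unfolding c'_def by force
qed

lemma poly_fun_deg_eq_image: "poly_fun_deg d = poly_of_coeffs d ` coeff_space d"
proof -
  have restrict: "poly_of_coeffs d c = poly_of_coeffs d (\<lambda>\<alpha>. if \<alpha> \<in> exponents d then c \<alpha> else 0)"
    for c :: "('n::finite \<Rightarrow> nat) \<Rightarrow> real"
    by (auto simp: poly_of_coeffs_def intro!: sum.cong)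
  have "poly_fun_deg d = range (poly_of_coeffs d)"
    unfolding poly_fun_deg_def poly_of_coeffs_def exponents_def monomial_def
    by (auto simp: fun_eq_iff)
  also have "\<dots> = poly_of_coeffs d ` coeff_space d"
    using restrict by (fastforce simp: coeff_space_def)
  finally show ?thesis .
qed

lemma poly_of_coeffs_const:
  "poly_of_coeffs d (\<lambda>\<alpha>. if \<alpha> = (\<lambda>_. 0) then a else 0) q = a"
proof -
  have "poly_of_coeffs d (\<lambda>\<alpha>. if \<alpha> = (\<lambda>_. 0) then a else 0) q
      = (\<Sum>\<alpha>\<in>exponents d. if \<alpha> = (\<lambda>_. 0) then a * monomial \<alpha> q else 0)"
    unfolding poly_of_coeffs_def by (intro sum.cong) auto
  also have "\<dots> = a * monomial (\<lambda>_. 0) q"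
    using sum.delta[OF finite_exponents, of "\<lambda>_. 0" "\<lambda>\<alpha>. a * monomial \<alpha> q" d]
    by (simp add: exponents_def)
  also have "\<dots> = a"
    by (simp add: monomial_def)
  finally show ?thesis .
qed

lemma Qbox_eq_cbox: "(Qbox::(real^'n) set) = cbox (-1) 1"
  by (auto simp: Qbox_def mem_box_cart abs_le_iff)

lemma continuous_on_poly_of_coeffs: "continuous_on S (poly_of_coeffs d c)"
  unfolding poly_of_coeffs_def monomial_def
  by (intro continuous_intros continuous_on_component continuous_on_id)

lemma integrable_poly_of_coeffs: "poly_of_coeffs d c integrable_on Qbox"
  unfolding Qbox_eq_cbox by (rule integrable_continuous continuous_on_poly_of_coeffs)+

lemma integral_poly_of_coeffs:
  "integral Qbox (poly_of_coeffs d c) = (\<Sum>\<alpha>\<in>exponents d. c \<alpha> * integral Qbox (monomial \<alpha>))"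
proof -
  have "monomial \<alpha> integrable_on Qbox" for \<alpha> :: "'n::finite \<Rightarrow> nat"
    unfolding Qbox_eq_cbox monomial_def
    by (intro integrable_continuous continuous_intros continuous_on_component continuous_on_id)
  then show ?thesis
    unfolding poly_of_coeffs_def
    by (subst integral_sum) (auto simp: finite_exponents intro!: integrable_on_mult_right)
qed

lemma abs_poly_of_coeffs_le:
  assumes "q \<in> Qbox"
  shows "\<bar>poly_of_coeffs d c q\<bar> \<le> (\<Sum>\<alpha>\<in>exponents d. \<bar>c \<alpha>\<bar>)"
proof -
  have "\<bar>monomial \<alpha> q\<bar> \<le> 1" for \<alpha>
    using assms unfolding monomial_def abs_prod Qbox_def
    by (auto intro!: prod_le_1 simp: power_abs power_le_one)
  then have "\<bar>c \<alpha> * monomial \<alpha> q\<bar> \<le> \<bar>c \<alpha>\<bar>" for \<alpha>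
    by (simp add: abs_mult mult_left_le)
  then have "(\<Sum>\<alpha>\<in>exponents d. \<bar>c \<alpha> * monomial \<alpha> q\<bar>) \<le> (\<Sum>\<alpha>\<in>exponents d. \<bar>c \<alpha>\<bar>)"
    by (rule sum_mono)
  then show ?thesis
    unfolding poly_of_coeffs_def by (rule order_trans[OF sum_abs])
qed

lemma poly_fun_bounded_on_Qbox:
  assumes "f \<in> poly_fun"
  shows "\<exists>M. \<forall>q\<in>(Qbox::(real^'n::finite) set). \<bar>f q\<bar> \<le> M"
proof -
  from assms obtain d where "f \<in> poly_fun_deg d" unfolding poly_fun_def by auto
  then obtain c where "f = poly_of_coeffs d c" unfolding poly_fun_deg_eq_image by auto
  then show ?thesis using abs_poly_of_coeffs_le by blast
qed

lemma poly_funs_bounded_on_Qbox: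
  fixes f :: "'a \<Rightarrow> real^'n::finite \<Rightarrow> real"
  assumes "finite K" and "\<forall>k\<in>K. f k \<in> poly_fun"
  shows "\<exists>M. \<forall>k\<in>K. \<forall>q\<in>Qbox. \<bar>f k q\<bar> \<le> M"
  using assms
proof (induction K rule: finite_induct)
  case (insert k K)
  then obtain M where "\<forall>k\<in>K. \<forall>q\<in>Qbox. \<bar>f k q\<bar> \<le> M" by auto
  moreover obtain M' where "\<forall>q\<in>Qbox. \<bar>f k q\<bar> \<le> M'"
    using poly_fun_bounded_on_Qbox insert.prems by blast
  ultimately show ?case
    by (intro exI[of _ "max M M'"]) (fastforce intro: max.coboundedI1 max.coboundedI2)
qed simp

lemma monic_root_norm_le:
  fixes s :: complex and a :: "nat \<Rightarrow> complex"
  assumes root: "s ^ m + (\<Sum>k<m. a k * s ^ k) = 0"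
    and bound: "\<forall>k<m. cmod (a k) \<le> M" and "m \<ge> 1"
  shows "cmod s \<le> max 1 (real m * M)"
proof (cases "cmod s \<le> 1")
  case False
  define r where "r = cmod s"
  have "r > 1" using False r_def by simp
  have "cmod (a 0) \<le> M" using bound \<open>m \<ge> 1\<close> by simp
  then have "M \<ge> 0" by (rule order_trans[OF norm_ge_zero])
  have "r * r ^ (m - 1) = cmod (s ^ m)"
    using \<open>m \<ge> 1\<close> by (cases m) (auto simp: r_def norm_mult norm_power)
  also have "s ^ m = - (\<Sum>k<m. a k * s ^ k)"
    using root by (simp add: eq_neg_iff_add_eq_0)
  also have "cmod (- (\<Sum>k<m. a k * s ^ k)) \<le> (\<Sum>k<m. cmod (a k) * r ^ k)"
    unfolding norm_minus_cancel r_def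
    by (rule order_trans[OF norm_sum]) (simp add: norm_mult norm_power)
  also have "\<dots> \<le> (\<Sum>k<m. M * r ^ (m - 1))"
  proof (rule sum_mono)
    fix k assume "k \<in> {..<m}"
    then show "cmod (a k) * r ^ k \<le> M * r ^ (m - 1)"
      using bound \<open>r > 1\<close> \<open>M \<ge> 0\<close> by (intro mult_mono power_increasing) auto
  qed
  also have "\<dots> = real m * M * r ^ (m - 1)" by simp
  finally have "r \<le> real m * M"
    using \<open>r > 1\<close> by (simp add: mult_le_cancel_right)
  then show ?thesis by (simp add: r_def)
qed simp

lemma peval_monic:
  assumes "m \<ge> 1" and "p m = (\<lambda>_. 1)"
  shows "peval p m q s = s ^ m + (\<Sum>k<m. complex_of_real (p k q) * s ^ k)"
  using assms unfolding peval_def by (simp add: lessThan_Suc_atMost[symmetric] add.commute)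

lemma peval_has_root:
  assumes "m \<ge> 1" and "p m = (\<lambda>_. 1)"
  shows "\<exists>s. peval p m q s = 0"
proof -
  have "complex_of_real (p 0 q) = 0 \<or> (\<exists>i\<in>{1..m}. complex_of_real (p i q) \<noteq> 0)"
    using assms by (intro disjI2 bexI[of _ m]) auto
  then obtain s where "(\<Sum>i\<le>m. complex_of_real (p i q) * s ^ i) = 0"
    by (rule fundamental_theorem_of_algebra)
  then show ?thesis unfolding peval_def by blast
qed

lemma Zset_fibre_nonempty:
  assumes "m \<ge> 1" and "p m = (\<lambda>_. 1)" and "q \<in> Qbox"
  shows "\<exists>x y. (q, x, y) \<in> Zset p m"
proof -
  obtain s where "peval p m q s = 0" using peval_has_root[of m p, OF assms(1,2)] by blast
  then have "(q, Re s, Im s) \<in> Zset p m"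
    using assms(3) unfolding Zset_def pRe_def pIm_def by simp
  then show ?thesis by blast
qed

lemma Zset_Re_bounded:
  assumes "m \<ge> 1" and "p m = (\<lambda>_. 1)" and "\<forall>k\<le>m. p k \<in> poly_fun"
  shows "\<exists>R. \<forall>(q, x, y)\<in>Zset p m. \<bar>x\<bar> \<le> R"
proof -
  obtain M where M: "\<forall>k<m. \<forall>q\<in>Qbox. \<bar>p k q\<bar> \<le> M"
    using poly_funs_bounded_on_Qbox[of "{..<m}" p] assms(3) by auto
  have "\<bar>x\<bar> \<le> max 1 (real m * M)" if "(q, x, y) \<in> Zset p m" for q x y
  proof -
    have "q \<in> Qbox" and "peval p m q (Complex x y) = 0"
      using that unfolding Zset_def pRe_def pIm_def by (auto intro: complex_eqI)
    then have "cmod (Complex x y) \<le> max 1 (real m * M)"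
      using M assms(1) peval_monic[of m p, OF assms(1,2)]
      by (intro monic_root_norm_le[where a="\<lambda>k. complex_of_real (p k q)"]) auto
    then show ?thesis using abs_Re_le_cmod[of "Complex x y"] by simp
  qed
  then show ?thesis by blast
qed

lemma continuous_on_linear_form: "continuous_on S (\<lambda>c::'a \<Rightarrow> real. \<Sum>\<alpha>\<in>A. c \<alpha> * w \<alpha>)"
  by (intro continuous_intros continuous_on_subset[OF continuous_on_product_coordinates]) auto

lemma continuous_on_integral_poly_of_coeffs:
  "continuous_on S (\<lambda>c. integral Qbox (poly_of_coeffs d c))"
  unfolding integral_poly_of_coeffs by (rule continuous_on_linear_form)

lemma closed_poly_of_coeffs_ge: "closed {c. t \<le> poly_of_coeffs d c q}"
  unfolding poly_of_coeffs_def
  by (intro closed_Collect_le continuous_on_linear_form continuous_intros)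

lemma closed_integral_poly_of_coeffs_le: "closed {c. integral Qbox (poly_of_coeffs d c) \<le> t}"
  by (intro closed_Collect_le continuous_on_integral_poly_of_coeffs continuous_intros)

lemma nonneg_poly_of_coeffs_zero_integral:
  assumes nonneg: "\<forall>q\<in>Qbox. 0 \<le> poly_of_coeffs d c q"
    and "integral Qbox (poly_of_coeffs d c) \<le> 0" and "q \<in> (Qbox::(real^'n::finite) set)"
  shows "poly_of_coeffs d c q = 0"
proof -
  have "0 \<le> integral Qbox (poly_of_coeffs d c)"
    using nonneg by (intro integral_nonneg integrable_poly_of_coeffs) auto
  then have "(poly_of_coeffs d c has_integral 0) (cbox (-1) (1::real^'n))"
    using assms(2) integrable_poly_of_coeffs[of d c]
    by (simp add: has_integral_integral flip: Qbox_eq_cbox)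
  moreover have "(0::real^'n) \<in> box (-1) 1" by (simp add: mem_box_cart)
  ultimately show ?thesis
    using nonneg assms(3) box_subset_cbox
    by (intro has_integral_0_cbox_imp_0[OF continuous_on_poly_of_coeffs])
      (auto simp: Qbox_eq_cbox dest: subsetD[OF box_subset_cbox])
qed

definition coeff_box :: "nat \<Rightarrow> real \<Rightarrow> (('n::finite \<Rightarrow> nat) \<Rightarrow> real) set" where
  "coeff_box d B = PiE UNIV (\<lambda>\<alpha>. if \<alpha> \<in> exponents d then {-B..B} else {0})"

definition coeff_sphere :: "nat \<Rightarrow> (('n::finite \<Rightarrow> nat) \<Rightarrow> real) set" where
  "coeff_sphere d = coeff_box d 1 \<inter> (\<Union>\<alpha>\<in>exponents d. {c. \<bar>c \<alpha>\<bar> = 1})"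

lemma mem_coeff_box:
  "c \<in> coeff_box d B \<longleftrightarrow> c \<in> coeff_space d \<and> (\<forall>\<alpha>\<in>exponents d. \<bar>c \<alpha>\<bar> \<le> B)"
  unfolding coeff_box_def coeff_space_def by (auto simp: PiE_def Pi_def abs_le_iff split: if_splits)

lemma compact_coeff_box: "compact (coeff_box d B)"
proof -
  have "compactin (product_topology (\<lambda>_. euclidean) UNIV) (coeff_box d B)"
    unfolding coeff_box_def by (subst compactin_PiE) auto
  then show ?thesis by (simp add: euclidean_product_topology)
qed

lemma compact_coeff_sphere: "compact (coeff_sphere d :: (('n::finite \<Rightarrow> nat) \<Rightarrow> real) set)"
proof -
  have "closed {c::('n \<Rightarrow> nat) \<Rightarrow> real. \<bar>c \<alpha>\<bar> = 1}" for \<alpha>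
    by (intro closed_Collect_eq continuous_on_rabs continuous_on_product_coordinates continuous_on_const)
  then show ?thesis
    unfolding coeff_sphere_def
    by (intro compact_Int_closed compact_coeff_box closed_UN finite_exponents ballI)
qed

lemma coeff_sphere_margin:
  "\<exists>\<delta>>0. \<forall>c\<in>coeff_sphere d. (\<exists>q\<in>(Qbox::(real^'n::finite) set). poly_of_coeffs d c q < -\<delta>)
      \<or> \<delta> < integral Qbox (poly_of_coeffs d c)"
proof (rule ccontr)
  define K where "K \<delta> = (\<Inter>q\<in>(Qbox::(real^'n) set). {c. -\<delta> \<le> poly_of_coeffs d c q})
      \<inter> {c. integral Qbox (poly_of_coeffs d c) \<le> \<delta>}" for \<delta>
  assume "\<not> ?thesis"
  then have near: "\<exists>c\<in>coeff_sphere d. c \<in> K \<delta>" if "\<delta> > 0" for \<delta>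
    using that unfolding K_def by (force simp: not_less)
  have "coeff_sphere d \<inter> (\<Inter>\<delta>\<in>{0<..}. K \<delta>) \<noteq> {}"
  proof (rule compact_imp_fip_image[OF compact_coeff_sphere])
    show "closed (K \<delta>)" for \<delta>
      unfolding K_def
      by (intro closed_Int closed_INT ballI closed_poly_of_coeffs_ge closed_integral_poly_of_coeffs_le)
  next
    fix D :: "real set" assume "finite D" "D \<subseteq> {0<..}"
    then have "Min (insert 1 D) > 0" and "\<forall>\<delta>\<in>D. Min (insert 1 D) \<le> \<delta>" by auto
    moreover have "K \<delta> \<subseteq> K \<delta>'" if "\<delta> \<le> \<delta>'" for \<delta> \<delta>'
      using that unfolding K_def by force
    ultimately show "coeff_sphere d \<inter> (\<Inter>\<delta>\<in>D. K \<delta>) \<noteq> {}"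
      using near by blast
  qed
  then obtain c where c: "c \<in> coeff_sphere d" and cK: "\<And>\<delta>. \<delta> > 0 \<Longrightarrow> c \<in> K \<delta>" by blast
  have nonneg_of_margins: "0 \<le> a" if "\<And>\<delta>. \<delta> > 0 \<Longrightarrow> -\<delta> \<le> a" for a :: real
    using that[of "- a / 2"] by linarith
  have nonneg: "\<forall>q\<in>Qbox. 0 \<le> poly_of_coeffs d c q"
  proof
    fix q :: "real^'n" assume "q \<in> Qbox"
    show "0 \<le> poly_of_coeffs d c q"
      by (rule nonneg_of_margins) (use cK \<open>q \<in> Qbox\<close> in \<open>auto simp: K_def\<close>)
  qed
  have "0 \<le> - integral Qbox (poly_of_coeffs d c)"
    by (rule nonneg_of_margins) (use cK in \<open>auto simp: K_def\<close>)
  then have "\<forall>q\<in>Qbox. poly_of_coeffs d c q = 0"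
    using nonneg_poly_of_coeffs_zero_integral[OF nonneg] by simp
  then have "\<forall>\<alpha>\<in>exponents d. c \<alpha> = 0"
    using poly_of_coeffs_eq_0_on_Qbox by blast
  with c show False unfolding coeff_sphere_def by auto
qed

definition coeff_norm :: "nat \<Rightarrow> (('n::finite \<Rightarrow> nat) \<Rightarrow> real) \<Rightarrow> real" where
  "coeff_norm d c = Max ((\<lambda>\<alpha>. \<bar>c \<alpha>\<bar>) ` exponents d)"

lemma abs_coeff_le_coeff_norm: "\<alpha> \<in> exponents d \<Longrightarrow> \<bar>c \<alpha>\<bar> \<le> coeff_norm d c"
  unfolding coeff_norm_def by (simp add: finite_exponents)

lemma normalized_coeffs_in_coeff_sphere:
  assumes "c \<in> coeff_space d" and "coeff_norm d c > 0"
  shows "(\<lambda>\<alpha>. c \<alpha> / coeff_norm d c) \<in> coeff_sphere d"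
proof -
  have "(\<lambda>_. 0) \<in> exponents d" by (simp add: exponents_def)
  then obtain \<alpha>0 where \<alpha>0: "\<alpha>0 \<in> exponents d" "\<bar>c \<alpha>0\<bar> = coeff_norm d c"
    unfolding coeff_norm_def using Max_in[of "(\<lambda>\<alpha>. \<bar>c \<alpha>\<bar>) ` exponents d"] finite_exponents
    by fastforce
  then have "\<bar>c \<alpha>0 / coeff_norm d c\<bar> = 1"
    using assms(2) by simp
  moreover have "\<bar>c \<alpha> / coeff_norm d c\<bar> \<le> 1" if "\<alpha> \<in> exponents d" for \<alpha>
    using abs_coeff_le_coeff_norm[OF that, of c] assms(2) by simp
  ultimately show ?thesis
    using assms(1) \<alpha>0(1) by (auto simp: coeff_sphere_def mem_coeff_box coeff_space_def)
qed

lemma coeff_norm_le_of_margin: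
  fixes c :: "('n::finite \<Rightarrow> nat) \<Rightarrow> real"
  assumes "\<delta> > 0" and margin: "\<forall>c\<in>coeff_sphere d.
      (\<exists>q\<in>(Qbox::(real^'n) set). poly_of_coeffs d c q < -\<delta>) \<or> \<delta> < integral Qbox (poly_of_coeffs d c)"
    and "c \<in> coeff_space d" and low: "\<forall>q\<in>Qbox. -R \<le> poly_of_coeffs d c q"
    and J: "integral Qbox (poly_of_coeffs d c) \<le> C"
  shows "coeff_norm d c \<le> (\<bar>R\<bar> + \<bar>C\<bar>) / \<delta>"
proof (rule ccontr)
  define N where "N = coeff_norm d c"
  assume "\<not> ?thesis"
  then have big: "\<bar>R\<bar> + \<bar>C\<bar> < \<delta> * N"
    using \<open>\<delta> > 0\<close> by (simp add: N_def field_simps)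
  then have "0 < \<delta> * N"
    using abs_ge_zero[of R] abs_ge_zero[of C] by linarith
  then have "N > 0"
    using \<open>\<delta> > 0\<close> by (simp add: zero_less_mult_iff)
  have scaled: "poly_of_coeffs d (\<lambda>\<alpha>. c \<alpha> / N) q = poly_of_coeffs d c q / N" for q
    unfolding poly_of_coeffs_def by (simp add: sum_divide_distrib)
  have scaled_integral:
    "integral Qbox (poly_of_coeffs d (\<lambda>\<alpha>. c \<alpha> / N)) = integral Qbox (poly_of_coeffs d c) / N"
    unfolding integral_poly_of_coeffs by (simp add: sum_divide_distrib)
  have "(\<lambda>\<alpha>. c \<alpha> / N) \<in> coeff_sphere d"
    using normalized_coeffs_in_coeff_sphere \<open>c \<in> coeff_space d\<close> \<open>N > 0\<close> by (simp add: N_def)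
  from margin[rule_format, OF this] show False
  proof
    assume "\<exists>q\<in>Qbox. poly_of_coeffs d (\<lambda>\<alpha>. c \<alpha> / N) q < -\<delta>"
    then obtain q where "q \<in> Qbox" and "poly_of_coeffs d c q < -\<delta> * N"
      using \<open>N > 0\<close> by (auto simp: scaled pos_divide_less_eq)
    moreover have "-R \<le> poly_of_coeffs d c q"
      using low \<open>q \<in> Qbox\<close> by blast
    ultimately show False
      using big abs_ge_self[of "-R"] abs_ge_zero[of C] by simp
  next
    assume "\<delta> < integral Qbox (poly_of_coeffs d (\<lambda>\<alpha>. c \<alpha> / N))"
    then have "\<delta> * N < integral Qbox (poly_of_coeffs d c)"
      using \<open>N > 0\<close> by (simp add: scaled_integral pos_less_divide_eq)
    then show False
      using J big abs_ge_self[of C] abs_ge_zero[of R] by linarith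
  qed
qed

lemma coeffs_bounded_below_bounded:
  "\<exists>B. \<forall>c\<in>coeff_space d. (\<forall>q\<in>(Qbox::(real^'n::finite) set). -R \<le> poly_of_coeffs d c q)
      \<longrightarrow> integral Qbox (poly_of_coeffs d c) \<le> C \<longrightarrow> c \<in> coeff_box d B"
proof -
  obtain \<delta> where "\<delta> > 0" and margin: "\<forall>c\<in>coeff_sphere d.
      (\<exists>q\<in>(Qbox::(real^'n) set). poly_of_coeffs d c q < -\<delta>) \<or> \<delta> < integral Qbox (poly_of_coeffs d c)"
    using coeff_sphere_margin by blast
  have "c \<in> coeff_box d ((\<bar>R\<bar> + \<bar>C\<bar>) / \<delta>)"
    if "c \<in> coeff_space d" "\<forall>q\<in>(Qbox::(real^'n) set). -R \<le> poly_of_coeffs d c q"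
      "integral Qbox (poly_of_coeffs d c) \<le> C" for c
  proof -
    have norm: "coeff_norm d c \<le> (\<bar>R\<bar> + \<bar>C\<bar>) / \<delta>"
      by (rule coeff_norm_le_of_margin[OF \<open>\<delta> > 0\<close> margin that])
    show ?thesis
      using that(1) order_trans[OF abs_coeff_le_coeff_norm norm] by (simp add: mem_coeff_box)
  qed
  then show ?thesis by blast
qed

definition feasible_coeffs :: "(nat \<Rightarrow> real^'n \<Rightarrow> real) \<Rightarrow> nat \<Rightarrow> nat \<Rightarrow> (('n::finite \<Rightarrow> nat) \<Rightarrow> real) set"
  where "feasible_coeffs p m d = {c \<in> coeff_space d. \<forall>(q, x, y)\<in>Zset p m. x \<le> poly_of_coeffs d c q}"

lemma feasible_eq_image: "feasible p m d = poly_of_coeffs d ` feasible_coeffs p m d"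
  unfolding feasible_def feasible_coeffs_def poly_fun_deg_eq_image by fastforce

lemma feasible_coeffs_nonempty:
  assumes "m \<ge> 1" and "p m = (\<lambda>_. 1)" and "\<forall>k\<le>m. p k \<in> poly_fun"
  shows "\<exists>c. c \<in> feasible_coeffs p m d"
proof -
  obtain R where "\<forall>(q, x, y)\<in>Zset p m. \<bar>x\<bar> \<le> R" using Zset_Re_bounded[OF assms] by blast
  then have "(\<lambda>\<alpha>. if \<alpha> = (\<lambda>_. 0) then R else 0) \<in> feasible_coeffs p m d"
    by (auto simp: feasible_coeffs_def coeff_space_def exponents_def poly_of_coeffs_const)
  then show ?thesis by blast
qed

lemma compact_feasible_coeffs_sublevel:
  assumes "m \<ge> 1" and "p m = (\<lambda>_. 1)" and "\<forall>k\<le>m. p k \<in> poly_fun"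
  shows "compact (feasible_coeffs p m d \<inter> {c. integral Qbox (poly_of_coeffs d c) \<le> C})"
proof -
  obtain R where R: "\<forall>(q, x, y)\<in>Zset p m. \<bar>x\<bar> \<le> R" using Zset_Re_bounded[OF assms] by blast
  \<comment> \<open>Every point of \<open>Q\<close> carries a zero, so feasibility forces \<open>-R \<le> v\<close> on \<open>Q\<close>.\<close>
  have "\<forall>q\<in>Qbox. -R \<le> poly_of_coeffs d c q" if "c \<in> feasible_coeffs p m d" for c
    using that R Zset_fibre_nonempty[of m p, OF assms(1,2)] unfolding feasible_coeffs_def by fastforce
  moreover obtain B where "\<forall>c\<in>coeff_space d. (\<forall>q\<in>(Qbox::(real^'a) set). -R \<le> poly_of_coeffs d c q)
      \<longrightarrow> integral Qbox (poly_of_coeffs d c) \<le> C \<longrightarrow> c \<in> coeff_box d B"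
    using coeffs_bounded_below_bounded by blast
  ultimately have "feasible_coeffs p m d \<inter> {c. integral Qbox (poly_of_coeffs d c) \<le> C}
      = coeff_box d B \<inter> (\<Inter>(q, x, y)\<in>Zset p m. {c. x \<le> poly_of_coeffs d c q})
          \<inter> {c. integral Qbox (poly_of_coeffs d c) \<le> C}"
    by (auto simp: feasible_coeffs_def mem_coeff_box)
  then show ?thesis
    by (simp add: case_prod_unfold compact_Int_closed compact_coeff_box closed_INT
        closed_poly_of_coeffs_ge closed_integral_poly_of_coeffs_le)
qed

theorem mainTheorem3:
  fixes p :: "nat \<Rightarrow> real^'n \<Rightarrow> real" and m d :: nat
  assumes "m \<ge> 1"
    and "p m = (\<lambda>_. 1)"
    and "\<forall>k\<le>m. p k \<in> poly_fun"
  shows "\<exists>v\<in>feasible p m d. \<forall>w\<in>feasible p m d.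
           integral Qbox v \<le> integral Qbox w"
proof -
  let ?J = "\<lambda>c. integral Qbox (poly_of_coeffs d c)"
  obtain c0 where c0: "c0 \<in> feasible_coeffs p m d"
    using feasible_coeffs_nonempty[OF assms] by blast
  have "compact (feasible_coeffs p m d \<inter> {c. ?J c \<le> ?J c0})"
    by (rule compact_feasible_coeffs_sublevel[OF assms])
  then obtain c where "c \<in> feasible_coeffs p m d" and "\<forall>c'\<in>feasible_coeffs p m d. ?J c \<le> ?J c'"
    using continuous_attains_inf_sublevel[OF c0 _ continuous_on_integral_poly_of_coeffs] by blast
  then show ?thesis
    unfolding feasible_eq_image by (intro bexI[of _ "poly_of_coeffs d c"]) auto
qed

end
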